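(* Let $p$ be a prime and $n$ a positive integer with $p^n\equiv 2 \pmod 3$, let $d=\frac{2p^n-1}{3}$ and $F(x)=x^d$ on $\mathrm{GF}(p^n)$. For every $c\in\mathrm{GF}(p^n)$ with $c\neq1$, ${}_c\Delta_F\le 3$.
   Context: For a function $F:\mathrm{GF}(p^n)\to\mathrm{GF}(p^n)$ and $a,b,c\in\mathrm{GF}(p^n)$, let ${}_c\Delta_F(a,b)=\#\{x\in\mathrm{GF}(p^n): F(x+a)-cF(x)=b\}$. The $c$-differential uniformity of $F$ is ${}_c\Delta_F=\max\{{}_c\Delta_F(a,b): a,b\in\mathrm{GF}(p^n),\ \text{and } a\neq 0 \text{ if } c=1\}$. *)

theory Defs
  imports "HOL-Computational_Algebra.Primes" "HOL-Library.Cardinality"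
begin

definition c_delta :: "('a::field \<Rightarrow> 'a) \<Rightarrow> 'a \<Rightarrow> 'a \<Rightarrow> 'a \<Rightarrow> nat" where
  "c_delta F c a b = card {x. F (x + a) - c * F x = b}"

definition c_diff_uniformity :: "('a::field \<Rightarrow> 'a) \<Rightarrow> 'a \<Rightarrow> nat" where
  "c_diff_uniformity F c = Max {c_delta F c a b | a b. c = 1 \<longrightarrow> a \<noteq> 0}"

end

theory Submission
  imports Defs "HOL-Computational_Algebra.Polynomial"
begin

text \<open>Since \<open>3 d \<equiv> 1 (mod p\<^sup>n - 1)\<close>, the map \<open>F(x) = x\<^sup>d\<close> is the inverse of cubing.
  Substituting \<open>x = y\<^sup>3\<close>, the equation \<open>F(x + a) - c F(x) = b\<close> becomes
  \<open>(b + c y)\<^sup>3 = y\<^sup>3 + a\<close>, a polynomial equation in \<open>y\<close> with leading coefficient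
  \<open>c\<^sup>3 - 1\<close>. This is nonzero because cubing is injective and \<open>c \<noteq> 1\<close>, so there are at
  most three solutions.\<close>

lemma power_card_minus_one_eq_1:
  fixes x :: "'a::{field,finite}"
  assumes "x \<noteq> 0"
  shows "x ^ (CARD('a) - 1) = 1"
proof -
  let ?S = "UNIV - {0::'a}"
  have "bij_betw (\<lambda>y. x * y) ?S ?S"
    by (rule bij_betw_byWitness[where f' = "\<lambda>y. y / x"]) (use assms in auto)
  then have "prod (\<lambda>y. x * y) ?S = prod id ?S"
    using prod.reindex_bij_betw[of _ ?S ?S id] by simp
  moreover have "prod (\<lambda>y. x * y) ?S = x ^ card ?S * prod id ?S"
    by (simp add: prod.distrib)
  moreover have "prod id ?S \<noteq> 0" by simp
  moreover have "card ?S = CARD('a) - 1"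
    by (simp add: card_Diff_singleton)
  ultimately show ?thesis by auto
qed

lemma power_mult_card_minus_one_Suc:
  fixes y :: "'a::{field,finite}"
  shows "y ^ (k * (CARD('a) - 1) + 1) = y"
proof (cases "y = 0")
  case False
  then show ?thesis
    by (simp add: power_add power_mult mult.commute[of k] power_card_minus_one_eq_1 del: One_nat_def)
qed simp

lemma power_eq_cube_iff:
  fixes u v :: "'a::{field,finite}"
  assumes "3 * d = 2 * (CARD('a) - 1) + 1"
  shows "u ^ d = v \<longleftrightarrow> u = v ^ 3"
proof -
  have "(y ^ 3) ^ d = y" and "(y ^ d) ^ 3 = y" for y :: 'a
    using power_mult_card_minus_one_Suc[of y 2]
    by (simp_all only: assms mult.commute[of d] flip: power_mult)
  then show ?thesis by metis
qed

lemma c_delta_cube_inverse_le_3: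
  fixes F :: "'a::field \<Rightarrow> 'a"
  assumes cube_inverse: "\<And>u v. F u = v \<longleftrightarrow> u = v ^ 3"
    and "c ^ 3 \<noteq> 1"
  shows "c_delta F c a b \<le> 3"
proof -
  define P where "P = [:b ^ 3 - a, 3 * b ^ 2 * c, 3 * b * c ^ 2, c ^ 3 - 1:]"
  have poly_P: "poly P y = (b + c * y) ^ 3 - (y ^ 3 + a)" for y
    unfolding P_def by (simp add: algebra_simps power2_eq_square power3_eq_cube)
  have degree_P: "degree P = 3"
    unfolding P_def using \<open>c ^ 3 \<noteq> 1\<close> by simp
  have "{x. F (x + a) - c * F x = b} = (\<lambda>y. y ^ 3) ` {y. poly P y = 0}"
  proof (intro equalityI subsetI)
    fix x assume "x \<in> {x. F (x + a) - c * F x = b}"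
    moreover have "x = F x ^ 3" "F (x + a) = b + c * F x \<longleftrightarrow> x + a = (b + c * F x) ^ 3"
      using cube_inverse by blast+
    ultimately show "x \<in> (\<lambda>y. y ^ 3) ` {y. poly P y = 0}"
      by (auto simp: poly_P algebra_simps intro!: image_eqI[where x = "F x"])
  next
    fix x assume "x \<in> (\<lambda>y. y ^ 3) ` {y. poly P y = 0}"
    then obtain y where "x = y ^ 3" "(b + c * y) ^ 3 = y ^ 3 + a"
      by (auto simp: poly_P)
    then have "F x = y" "F (x + a) = b + c * y"
      using cube_inverse by auto
    then show "x \<in> {x. F (x + a) - c * F x = b}" by simp
  qed
  then have "c_delta F c a b \<le> card {y. poly P y = 0}"
    unfolding c_delta_def
    using poly_roots_finite[of P] degree_P by (metis card_image_le degree_0 zero_neq_numeral)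
  also have "\<dots> \<le> 3"
    using card_poly_roots_bound[of P] degree_P by fastforce
  finally show ?thesis .
qed

lemma c_diff_uniformity_le:
  fixes F :: "'a::{field,finite} \<Rightarrow> 'a"
  assumes "\<And>a b. c_delta F c a b \<le> k"
  shows "c_diff_uniformity F c \<le> k"
proof -
  let ?A = "{c_delta F c a b | a b. c = 1 \<longrightarrow> a \<noteq> 0}"
  have "?A \<subseteq> range (case_prod (c_delta F c))" by auto
  then have "finite ?A" by (rule finite_subset) simp
  moreover have "c_delta F c 1 0 \<in> ?A" by auto
  ultimately show ?thesis
    unfolding c_diff_uniformity_def using assms by (subst Max_le_iff) auto
qed

theorem theorem5:
  fixes p n :: nat and c :: "'a::{field,finite}"
  assumes "prime p" and "n > 0"
    and "CARD('a) = p ^ n"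
    and "p ^ n mod 3 = 2"
    and "c \<noteq> 1"
  shows "c_diff_uniformity (\<lambda>x::'a. x ^ ((2 * p ^ n - 1) div 3)) c \<le> 3"
proof -
  define d where "d = (2 * p ^ n - 1) div 3"
  have "3 * d = 2 * (CARD('a) - 1) + 1"
    unfolding d_def assms(3) using assms(4) by presburger
  then have cube_inverse: "u ^ d = v \<longleftrightarrow> u = v ^ 3" for u v :: 'a
    by (rule power_eq_cube_iff)
  have "c ^ 3 \<noteq> 1"
    using cube_inverse[of 1 c] cube_inverse[of "c ^ 3" c] \<open>c \<noteq> 1\<close> by auto
  then have "c_delta (\<lambda>x. x ^ d) c a b \<le> 3" for a b
    using cube_inverse by (intro c_delta_cube_inverse_le_3) auto
  then show ?thesis
    unfolding d_def by (rule c_diff_uniformity_le)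
qed

end
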